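(* For every permutation $w\in S_n$, $\Upsilon_w(\beta)=\Upsilon_{w^{-1}}(\beta)$.
   Context: For $w\in S_n$, $\mathfrak{G}^{(\beta)}_w$ is the $\beta$-Grothendieck polynomial: $\mathfrak{G}^{(\beta)}_{w_0}=x_1^{n-1}\cdots x_{n-1}$ for $w_0=n\cdots21$, and $\mathfrak{G}^{(\beta)}_w=\partial_i((1+\beta x_{i+1})\mathfrak{G}^{(\beta)}_{ws_i})$ when $w(i)<w(i+1)$, with $\partial_if=(f-s_if)/(x_i-x_{i+1})$. $\Upsilon_w(\beta)=\mathfrak{G}^{(\beta)}_w(1,\dots,1)$. *)

theory Defs
  imports "HOL-Library.Poly_Mapping" "HOL-Computational_Algebra.Polynomial"
          "HOL-Combinatorics.Transposition" "HOL-Combinatorics.Permutations"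
begin

text \<open>Polynomials in the variables x_1, x_2, ... (indexed by nat), with
  coefficients in Z[beta] (univariate integer polynomials in beta).
  A monomial is a finitely supported exponent vector nat =>0 nat.\<close>

type_synonym mpoly = "(nat \<Rightarrow>\<^sub>0 nat) \<Rightarrow>\<^sub>0 int poly"

definition Var :: "nat \<Rightarrow> mpoly" where
  "Var i = Poly_Mapping.single (Poly_Mapping.single i 1) 1"

definition beta :: mpoly where
  "beta = Poly_Mapping.single 0 [:0, 1:]"

definition swapvars :: "nat \<Rightarrow> mpoly \<Rightarrow> mpoly" where
  "swapvars i f =
     Poly_Mapping.map_key (Poly_Mapping.map_key (transpose i (Suc i))) f"

definition divdiff :: "nat \<Rightarrow> mpoly \<Rightarrow> mpoly" where
  "divdiff i f = (THE g. (Var i - Var (Suc i)) * g = f - swapvars i f)"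

definition w0 :: "nat \<Rightarrow> nat \<Rightarrow> nat" where
  "w0 n = (\<lambda>j. if j \<in> {1..n} then Suc n - j else j)"

inductive is_groth :: "nat \<Rightarrow> (nat \<Rightarrow> nat) \<Rightarrow> mpoly \<Rightarrow> bool" for n where
  top: "is_groth n (w0 n) (\<Prod>j\<in>{1..n}. Var j ^ (n - j))"
| step: "\<lbrakk> is_groth n (w \<circ> transpose i (Suc i)) G; 1 \<le> i; i < n; w i < w (Suc i) \<rbrakk>
         \<Longrightarrow> is_groth n w (divdiff i ((1 + beta * Var (Suc i)) * G))"

definition groth :: "nat \<Rightarrow> (nat \<Rightarrow> nat) \<Rightarrow> mpoly" where
  "groth n w = (THE G. is_groth n w G)"

text \<open>Evaluation at x_1 = x_2 = ... = 1 (sum of all coefficients), in Z[beta].\<close>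
definition eval_ones :: "mpoly \<Rightarrow> int poly" where
  "eval_ones f = (\<Sum>m\<in>Poly_Mapping.keys f. Poly_Mapping.lookup f m)"

definition Upsilon :: "nat \<Rightarrow> (nat \<Rightarrow> nat) \<Rightarrow> int poly" where
  "Upsilon n w = eval_ones (groth n w)"

end

theory Submission
  imports Defs
begin

text \<open>Fomin and Kirillov express \<open>G\<^sub>w\<close> as the coefficient of \<open>w\<close> in the product of the
  factors \<open>h\<^sub>a(x\<^sub>r) = 1 + x\<^sub>r u\<^sub>a\<close>, \<open>a = n - 1, \<dots>, r\<close>, over the rows \<open>r = 1, \<dots>, n\<close>,
  computed in the algebra of the \<open>u\<^sub>a\<close> with \<open>u\<^sub>a\<^sup>2 = \<beta> u\<^sub>a\<close> and the braid relations.
  A length count shows that this product has leading coefficient \<open>x\<^sup>\<delta>\<close> at \<open>w\<^sub>0\<close>, and the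
  Yang--Baxter equation for the \<open>h\<^sub>a\<close> makes it satisfy the divided-difference recursion,
  so it agrees with the recursively defined \<open>G\<^sub>w\<close>. Setting all \<open>x\<^sub>r = 1\<close> turns
  \<open>\<Upsilon>\<^sub>w\<close> into the coefficient of \<open>w\<close> in a product of factors \<open>h\<^sub>a(1)\<close>. Inverting
  permutations is an anti-automorphism of the algebra fixing every \<open>u\<^sub>a\<close>, so it reverses the
  product; but with equal parameters the reversed word is obtained from the original one by
  commuting factors with distant indices, so the product is unchanged and
  \<open>\<Upsilon>\<^bsub>w\<^sup>-\<^sup>1\<^esub> = \<Upsilon>\<^sub>w\<close>.\<close>

section \<open>The Id-Coxeter algebra\<close>

abbreviation \<sigma> :: "nat \<Rightarrow> nat \<Rightarrow> nat" where
  "\<sigma> a \<equiv> transpose a (Suc a)"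

text \<open>\<open>F :: 'a hecke\<close> encodes the formal sum of the \<open>F v \<cdot> v\<close> in the algebra with the
  permutations as basis and \<open>v \<cdot> u\<^sub>a = v \<circ> \<sigma> a\<close> if \<open>v a < v (Suc a)\<close>, \<open>v \<cdot> u\<^sub>a = b \<cdot> v\<close>
  otherwise. Thus \<open>mult_u b a F\<close> is \<open>F u\<^sub>a\<close> and \<open>mult_h b a x F\<close> is \<open>F h\<^sub>a(x)\<close>.\<close>

type_synonym 'a hecke = "(nat \<Rightarrow> nat) \<Rightarrow> 'a"

definition mult_u :: "'a::comm_ring_1 \<Rightarrow> nat \<Rightarrow> 'a hecke \<Rightarrow> 'a hecke" where
  "mult_u b a F v = (if v (Suc a) < v a then F (v \<circ> \<sigma> a) + b * F v else 0)"

definition mult_h :: "'a::comm_ring_1 \<Rightarrow> nat \<Rightarrow> 'a \<Rightarrow> 'a hecke \<Rightarrow> 'a hecke" where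
  "mult_h b a x F = (\<lambda>v. F v + x * mult_u b a F v)"

text \<open>\<open>g\<^sub>a(x, y) = (1 + b y) + (x - y) u\<^sub>a\<close> is \<open>(1 + b y) h\<^sub>a(z)\<close> for the \<open>z\<close> with
  \<open>y + z + b y z = x\<close>, so that \<open>h\<^sub>a(y) g\<^sub>a(x, y) = (1 + b y) h\<^sub>a(x)\<close>; clearing the
  denominator keeps the Yang--Baxter relations below inside a ring.\<close>

definition mult_g :: "'a::comm_ring_1 \<Rightarrow> nat \<Rightarrow> 'a \<Rightarrow> 'a \<Rightarrow> 'a hecke \<Rightarrow> 'a hecke" where
  "mult_g b a x y F = (\<lambda>v. (1 + b * y) * F v + (x - y) * mult_u b a F v)"

lemma mult_u_add: "mult_u b a (\<lambda>v. F v + G v) w = mult_u b a F w + mult_u b a G w"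
  by (simp add: mult_u_def algebra_simps)

lemma mult_u_scale: "mult_u b a (\<lambda>v. c * F v) w = c * mult_u b a F w"
  by (simp add: mult_u_def algebra_simps)

lemma mult_u_square: "mult_u b a (mult_u b a F) = (\<lambda>v. b * mult_u b a F v)"
  by (simp add: mult_u_def transpose_def fun_eq_iff)

lemma mult_u_braid:
  "mult_u b (Suc a) (mult_u b a (mult_u b (Suc a) F)) = mult_u b a (mult_u b (Suc a) (mult_u b a F))"
proof
  fix v :: "nat \<Rightarrow> nat"
  have "v \<circ> \<sigma> a \<circ> \<sigma> (Suc a) \<circ> \<sigma> a = v \<circ> \<sigma> (Suc a) \<circ> \<sigma> a \<circ> \<sigma> (Suc a)"
    by (auto simp: fun_eq_iff transpose_def)
  then show "mult_u b (Suc a) (mult_u b a (mult_u b (Suc a) F)) v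
           = mult_u b a (mult_u b (Suc a) (mult_u b a F)) v"
    by (auto simp: mult_u_def transpose_def algebra_simps)
qed

lemma mult_u_commute:
  assumes "Suc a < c \<or> Suc c < a"
  shows "mult_u b a (mult_u b c F) = mult_u b c (mult_u b a F)"
proof
  fix v :: "nat \<Rightarrow> nat"
  have "v \<circ> \<sigma> a \<circ> \<sigma> c = v \<circ> \<sigma> c \<circ> \<sigma> a"
    using assms by (auto simp: fun_eq_iff transpose_def)
  with assms show "mult_u b a (mult_u b c F) v = mult_u b c (mult_u b a F) v"
    by (auto simp: mult_u_def transpose_def algebra_simps)
qed

lemma mult_h_scale: "mult_h b a x (\<lambda>v. c * F v) = (\<lambda>v. c * mult_h b a x F v)"
  by (simp add: mult_h_def mult_u_scale algebra_simps)

lemma mult_h_commute: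
  "Suc a < c \<or> Suc c < a \<Longrightarrow> mult_h b a x (mult_h b c y F) = mult_h b c y (mult_h b a x F)"
  by (simp add: mult_h_def fun_eq_iff mult_u_add mult_u_scale mult_u_commute[of a c] algebra_simps)

lemma mult_g_mult_h: "mult_g b a x y (mult_h b a y F) = (\<lambda>v. (1 + b * y) * mult_h b a x F v)"
  unfolding mult_h_def mult_g_def
  by (simp only: mult_u_add mult_u_scale mult_u_square) (simp add: algebra_simps)

lemma mult_h_mult_g: "mult_h b a y (mult_g b a x y F) = (\<lambda>v. (1 + b * y) * mult_h b a x F v)"
  unfolding mult_h_def mult_g_def
  by (simp only: mult_u_add mult_u_scale mult_u_square) (simp add: algebra_simps)

lemma mult_g_braid:
  "mult_h b (Suc a) y (mult_h b a x (mult_g b (Suc a) x y F))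
     = mult_g b a x y (mult_h b (Suc a) x (mult_h b a y F))"
  unfolding mult_h_def mult_g_def
  by (simp only: mult_u_add mult_u_scale mult_u_square mult_u_braid) (simp add: algebra_simps)

fun mult_hs :: "'a::comm_ring_1 \<Rightarrow> (nat \<times> 'a) list \<Rightarrow> 'a hecke \<Rightarrow> 'a hecke" where
  "mult_hs b [] F = F"
| "mult_hs b ((a, x) # ws) F = mult_hs b ws (mult_h b a x F)"

lemma mult_hs_append: "mult_hs b (ws @ vs) F = mult_hs b vs (mult_hs b ws F)"
  by (induction b ws F rule: mult_hs.induct) simp_all

lemma mult_hs_scale: "mult_hs b ws (\<lambda>v. c * F v) = (\<lambda>v. c * mult_hs b ws F v)"
  by (induction b ws F rule: mult_hs.induct) (simp_all add: mult_h_scale)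

lemma mult_hs_mult_h_commute:
  "\<forall>(c, y) \<in> set ws. Suc a < c \<or> Suc c < a
     \<Longrightarrow> mult_hs b ws (mult_h b a x F) = mult_h b a x (mult_hs b ws F)"
  by (induction b ws F rule: mult_hs.induct) (auto simp: mult_h_commute)

lemma mult_hs_commute:
  "\<forall>(a, x) \<in> set ws. \<forall>(c, y) \<in> set vs. Suc a < c \<or> Suc c < a
     \<Longrightarrow> mult_hs b (ws @ vs) F = mult_hs b (vs @ ws) F"
  by (induction b ws F rule: mult_hs.induct) (auto simp: mult_hs_append mult_hs_mult_h_commute)

text \<open>\<open>fk b n x\<close> is the Fomin--Kirillov product
  \<open>\<Prod>\<^sub>r h\<^bsub>n-1\<^esub>(x\<^sub>r) \<cdots> h\<^sub>r(x\<^sub>r)\<close>, \<open>r = 1, \<dots>, n\<close>, whose coefficients will be the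
  Grothendieck polynomials.\<close>

definition hecke_one :: "'a::comm_ring_1 hecke" where
  "hecke_one v = (if v = id then 1 else 0)"

definition fk_row :: "nat \<Rightarrow> nat \<Rightarrow> 'a \<Rightarrow> (nat \<times> 'a) list" where
  "fk_row i j x = map (\<lambda>a. (a, x)) (rev [i..<j])"

definition fk_rows :: "nat \<Rightarrow> (nat \<Rightarrow> 'a) \<Rightarrow> nat list \<Rightarrow> (nat \<times> 'a) list" where
  "fk_rows n x rs = concat (map (\<lambda>r. fk_row r n (x r)) rs)"

definition fk :: "'a::comm_ring_1 \<Rightarrow> nat \<Rightarrow> (nat \<Rightarrow> 'a) \<Rightarrow> 'a hecke" where
  "fk b n x = mult_hs b (fk_rows n x [1..<Suc n]) hecke_one"

lemma fk_row_empty [simp]: "j \<le> i \<Longrightarrow> fk_row i j x = []"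
  by (simp add: fk_row_def)

lemma fk_row_Suc: "i \<le> j \<Longrightarrow> fk_row i (Suc j) x = (j, x) # fk_row i j x"
  by (simp add: fk_row_def)

lemma fk_row_snoc: "i < j \<Longrightarrow> fk_row (Suc i) j x @ [(i, x)] = fk_row i j x"
  by (simp add: fk_row_def upt_rec)

lemma fk_rows_append [simp]: "fk_rows n x (rs @ rs') = fk_rows n x rs @ fk_rows n x rs'"
  by (simp add: fk_rows_def)

lemma fk_rows_Cons [simp]: "fk_rows n x (r # rs) = fk_row r n (x r) @ fk_rows n x rs"
  by (simp add: fk_rows_def)

lemma fk_rows_Nil [simp]: "fk_rows n x [] = []"
  by (simp add: fk_rows_def)

lemma fk_rows_cong: "(\<And>r. r \<in> set rs \<Longrightarrow> x r = y r) \<Longrightarrow> fk_rows n x rs = fk_rows n y rs"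
  unfolding fk_rows_def by (intro arg_cong[where f = concat] map_cong) auto

locale comm_ring_hom =
  fixes \<phi> :: "'a::comm_ring_1 \<Rightarrow> 'b::comm_ring_1"
  assumes hom_add [simp]: "\<phi> (x + y) = \<phi> x + \<phi> y"
    and hom_mult [simp]: "\<phi> (x * y) = \<phi> x * \<phi> y"
    and hom_one [simp]: "\<phi> 1 = 1"
begin

lemma hom_zero [simp]: "\<phi> 0 = 0"
  using hom_add[of 0 0] by simp

lemma hom_diff [simp]: "\<phi> (x - y) = \<phi> x - \<phi> y"
  by (metis diff_add_cancel add_diff_cancel hom_add)

lemma hom_mult_h: "\<phi> \<circ> mult_h b a x F = mult_h (\<phi> b) a (\<phi> x) (\<phi> \<circ> F)"
  by (simp add: fun_eq_iff mult_h_def mult_u_def)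

lemma hom_mult_hs: "\<phi> (mult_hs b ws F v) = mult_hs (\<phi> b) (map (apsnd \<phi>) ws) (\<phi> \<circ> F) v"
proof (induction b ws F rule: mult_hs.induct)
  case (2 b a x ws F)
  then show ?case
    by (simp only: mult_hs.simps list.map apsnd_conv hom_mult_h)
qed simp

lemma hom_fk: "\<phi> \<circ> fk b n x = fk (\<phi> b) n (\<phi> \<circ> x)"
proof -
  have one: "\<phi> \<circ> hecke_one = hecke_one"
    by (simp add: fun_eq_iff hecke_one_def)
  have rows: "map (apsnd \<phi>) (fk_rows n x rs) = fk_rows n (\<phi> \<circ> x) rs" for rs
    by (induction rs) (simp_all add: fk_row_def)
  show ?thesis
    unfolding fk_def by (rule ext) (simp only: comp_apply hom_mult_hs rows one)
qed

end

section \<open>Symmetry of the Fomin--Kirillov product\<close>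

lemma mult_hs_move_front:
  "\<forall>(a, x) \<in> set ws. Suc c < a \<or> Suc a < c
     \<Longrightarrow> mult_hs b (ws @ (c, y) # vs) F = mult_hs b (ws @ vs) (mult_h b c y F)"
  by (simp add: mult_hs_append mult_hs_mult_h_commute)

lemma mult_g_through_rows:
  assumes "i \<le> j"
  shows "mult_hs b (fk_row i j x @ fk_row i (Suc j) y) (mult_g b j x y F)
       = (\<lambda>v. (1 + b * y) * mult_hs b (fk_row i j y @ fk_row i (Suc j) x) F v)"
  using assms
proof (induction j arbitrary: F rule: dec_induct)
  case base
  then show ?case by (simp add: fk_row_Suc mult_h_mult_g)
next
  case (step j)
  have far: "\<forall>(a, z) \<in> set (fk_row i j w). Suc (Suc j) < a \<or> Suc a < Suc j" for w :: 'a
    by (auto simp: fk_row_def)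
  have "mult_hs b (fk_row i (Suc j) x @ fk_row i (Suc (Suc j)) y) (mult_g b (Suc j) x y F)
      = mult_hs b (fk_row i j x @ (Suc j, y) # fk_row i (Suc j) y) (mult_h b j x (mult_g b (Suc j) x y F))"
    using step.hyps by (simp add: fk_row_Suc)
  also have "\<dots> = mult_hs b (fk_row i j x @ fk_row i (Suc j) y)
                    (mult_g b j x y (mult_h b (Suc j) x (mult_h b j y F)))"
    by (simp add: mult_hs_move_front[OF far] mult_g_braid)
  also have "\<dots> = (\<lambda>v. (1 + b * y) * mult_hs b (fk_row i j y @ fk_row i (Suc j) x)
                    (mult_h b (Suc j) x (mult_h b j y F)) v)"
    by (rule step.IH)
  also have "\<dots> = (\<lambda>v. (1 + b * y) * mult_hs b (fk_row i (Suc j) y @ fk_row i (Suc (Suc j)) x) F v)"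
    using step.hyps by (simp add: fk_row_Suc mult_hs_move_front[OF far])
  finally show ?case .
qed

lemma fk_row_pair_swap_scaled:
  "(1 + b * y) * mult_hs b (fk_row i j x @ fk_row i j y) F v
     = (1 + b * y) * mult_hs b (fk_row i j y @ fk_row i j x) F v"
proof (cases "i < j")
  case True
  then obtain m where m: "j = Suc m" "i \<le> m"
    by (cases j) auto
  have "(1 + b * y) * mult_hs b (fk_row i j x @ fk_row i j y) F v
      = mult_hs b (fk_row i m x @ fk_row i (Suc m) y) (\<lambda>v. (1 + b * y) * mult_h b m x F v) v"
    using m by (simp add: fk_row_Suc mult_hs_scale)
  also have "\<dots> = mult_hs b (fk_row i m x @ fk_row i (Suc m) y) (mult_g b m x y (mult_h b m y F)) v"
    by (simp only: mult_g_mult_h)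
  also have "\<dots> = (1 + b * y) * mult_hs b (fk_row i m y @ fk_row i (Suc m) x) (mult_h b m y F) v"
    by (simp only: mult_g_through_rows[OF m(2)])
  also have "\<dots> = (1 + b * y) * mult_hs b (fk_row i j y @ fk_row i j x) F v"
    using m by (simp add: fk_row_Suc)
  finally show ?thesis .
qed simp

lemma upt_split_pair:
  "1 \<le> i \<Longrightarrow> i < n \<Longrightarrow> [1..<Suc n] = [1..<i] @ i # Suc i # [Suc (Suc i)..<Suc n]"
proof -
  assume "1 \<le> i" "i < n"
  then have "[1..<Suc n] = [1..<i] @ [i..<Suc n]"
    using upt_add_eq_append[of 1 i "Suc n - i"] by simp
  also have "[i..<Suc n] = i # Suc i # [Suc (Suc i)..<Suc n]"
    using \<open>i < n\<close> by (simp add: upt_rec)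
  finally show ?thesis .
qed

lemma mult_h_fk:
  assumes "1 \<le> i" "i < n"
  shows "mult_h b i (x (Suc i)) (fk b n x)
       = mult_hs b (fk_rows n x [Suc (Suc i)..<Suc n])
           (mult_hs b (fk_row i n (x i) @ fk_row i n (x (Suc i)))
             (mult_hs b (fk_rows n x [1..<i]) hecke_one))"
proof -
  have far: "\<forall>(c, z) \<in> set (fk_rows n x [Suc (Suc i)..<Suc n]). Suc i < c \<or> Suc c < i"
    by (auto simp: fk_rows_def fk_row_def)
  have row: "mult_h b i (x (Suc i)) (mult_hs b (fk_row (Suc i) n (x (Suc i))) G)
      = mult_hs b (fk_row i n (x (Suc i))) G" for G
    by (simp add: mult_hs_append flip: fk_row_snoc[OF assms(2)])
  show ?thesis
    unfolding fk_def upt_split_pair[OF assms]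
    by (simp only: fk_rows_append fk_rows_Cons mult_hs_append row
        flip: mult_hs_mult_h_commute[OF far])
qed

lemma fk_swap_scaled:
  assumes "1 \<le> i" "i < n"
  shows "(1 + b * x (Suc i)) * mult_h b i (x (Suc i)) (fk b n x) v
       = (1 + b * x (Suc i)) * mult_h b i (x i) (fk b n (x \<circ> \<sigma> i)) v"
proof -
  let ?y = "x (Suc i)" and ?x' = "x \<circ> \<sigma> i"
  let ?P = "fk_rows n x [1..<i]" and ?Q = "fk_rows n x [Suc (Suc i)..<Suc n]"
  let ?A = "\<lambda>z z'. mult_hs b (fk_row i n z @ fk_row i n z') (mult_hs b ?P hecke_one)"
  have P: "fk_rows n ?x' [1..<i] = ?P" and Q: "fk_rows n ?x' [Suc (Suc i)..<Suc n] = ?Q"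
    by (auto intro: fk_rows_cong simp: transpose_def)
  have x': "?x' i = ?y" "?x' (Suc i) = x i"
    by simp_all
  have A: "(\<lambda>v. (1 + b * ?y) * ?A (x i) ?y v) = (\<lambda>v. (1 + b * ?y) * ?A ?y (x i) v)"
    by (rule ext) (rule fk_row_pair_swap_scaled)
  have "(1 + b * ?y) * mult_h b i ?y (fk b n x) v = mult_hs b ?Q (\<lambda>v. (1 + b * ?y) * ?A (x i) ?y v) v"
    by (simp add: mult_h_fk[OF assms] mult_hs_scale)
  also have "\<dots> = (1 + b * ?y) * mult_hs b ?Q (?A ?y (x i)) v"
    by (simp only: A mult_hs_scale)
  also have "\<dots> = (1 + b * ?y) * mult_h b i (x i) (fk b n ?x') v"
    using mult_h_fk[OF assms, of b ?x'] by (simp only: P Q x')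
  finally show ?thesis .
qed

lemma poly_mapping_plus_single_induct:
  fixes P :: "('a \<Rightarrow>\<^sub>0 'b::monoid_add) \<Rightarrow> bool"
  assumes "P 0" and "\<And>f a c. P f \<Longrightarrow> P (f + Poly_Mapping.single a c)"
  shows "P f"
proof (induction f rule: Poly_Mapping.update_induct)
  case (update f a c)
  have "Poly_Mapping.update a c f = f + Poly_Mapping.single a c"
    using update.hyps(1)
    by (intro poly_mapping_eqI)
      (auto simp: Poly_Mapping.lookup_update lookup_add lookup_single when_def in_keys_iff)
  then show ?case
    using assms(2)[OF update.IH] by simp
qed (rule assms(1))

lemma map_key_transpose_involutory [simp]:
  "Poly_Mapping.map_key (transpose a b) (Poly_Mapping.map_key (transpose a b) m) = m"
proof -
  have "Poly_Mapping.map_key (transpose a b) (Poly_Mapping.map_key (transpose a b) m)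
      = Poly_Mapping.map_key (transpose a b \<circ> transpose a b) m"
    by (rule map_key_compose) (simp_all add: inj_transpose)
  then show ?thesis
    by (simp add: map_key_id[unfolded id_def[symmetric]])
qed

lemma lookup_swapvars:
  "Poly_Mapping.lookup (swapvars i f) m = Poly_Mapping.lookup f (Poly_Mapping.map_key (\<sigma> i) m)"
proof -
  have "inj (Poly_Mapping.map_key (\<sigma> i))"
    by (metis injI map_key_transpose_involutory)
  then show ?thesis
    using map_key.rep_eq[OF \<open>inj _\<close>, of f] by (simp add: swapvars_def)
qed

lemma swapvars_single:
  "swapvars i (Poly_Mapping.single m c) = Poly_Mapping.single (Poly_Mapping.map_key (\<sigma> i) m) c"
  by (rule poly_mapping_eqI) (auto simp: lookup_swapvars lookup_single when_def)

lemma swapvars_add: "swapvars i (f + g) = swapvars i f + swapvars i g"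
  by (rule poly_mapping_eqI) (simp add: lookup_swapvars lookup_add)

lemma swapvars_mult: "swapvars i (f * g) = swapvars i f * swapvars i g"
proof (induction f rule: poly_mapping_plus_single_induct)
  case (2 f a c)
  have "swapvars i (Poly_Mapping.single a c * g) = swapvars i (Poly_Mapping.single a c) * swapvars i g"
  proof (induction g rule: poly_mapping_plus_single_induct)
    case (2 g d e)
    then show ?case
      by (simp add: distrib_left swapvars_add swapvars_single mult_single map_key_plus inj_transpose)
  qed (simp add: poly_mapping_eqI lookup_swapvars)
  with 2 show ?case
    by (simp add: distrib_right swapvars_add)
qed (simp add: poly_mapping_eqI lookup_swapvars)

lemma comm_ring_hom_swapvars: "comm_ring_hom (swapvars i)"
proof
  show "swapvars i 1 = 1"
    using swapvars_single[of i 0 1] by (simp add: poly_mapping_eqI lookup_swapvars)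
qed (simp_all add: swapvars_add swapvars_mult)

lemma map_key_transpose_single:
  "Poly_Mapping.map_key (transpose a b) (Poly_Mapping.single j c) = Poly_Mapping.single (transpose a b j) c"
  by (metis map_key_single inj_transpose transpose_involutory)

lemma swapvars_Var [simp]: "swapvars i (Var j) = Var (\<sigma> i j)"
  by (simp add: Var_def swapvars_single map_key_transpose_single)

lemma swapvars_beta [simp]: "swapvars i beta = beta"
  by (simp add: beta_def swapvars_single)

lemma eval_ones_superset:
  assumes "finite K" "Poly_Mapping.keys f \<subseteq> K"
  shows "eval_ones f = (\<Sum>m\<in>K. Poly_Mapping.lookup f m)"
  unfolding eval_ones_def
  by (rule sum.mono_neutral_left) (use assms in \<open>auto simp: in_keys_iff\<close>)

lemma eval_ones_add: "eval_ones (f + g) = eval_ones f + eval_ones g"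
proof -
  let ?K = "Poly_Mapping.keys f \<union> Poly_Mapping.keys g"
  have "eval_ones (f + g) = (\<Sum>m\<in>?K. Poly_Mapping.lookup (f + g) m)"
    by (rule eval_ones_superset) (auto simp: keys_add)
  also have "\<dots> = eval_ones f + eval_ones g"
    by (simp add: lookup_add sum.distrib eval_ones_superset[symmetric])
  finally show ?thesis .
qed

lemma eval_ones_single [simp]: "eval_ones (Poly_Mapping.single m c) = c"
  by (simp add: eval_ones_def)

lemma eval_ones_mult: "eval_ones (f * g) = eval_ones f * eval_ones g"
proof (induction f rule: poly_mapping_plus_single_induct)
  case (2 f a c)
  have "eval_ones (Poly_Mapping.single a c * g) = c * eval_ones g"
  proof (induction g rule: poly_mapping_plus_single_induct)
    case (2 g d e)
    then show ?case
      by (simp add: distrib_left mult_single eval_ones_add)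
  qed (simp add: eval_ones_def)
  with 2 show ?case
    by (simp add: distrib_right eval_ones_add)
qed (simp add: eval_ones_def)

lemma comm_ring_hom_eval_ones: "comm_ring_hom eval_ones"
  by standard (simp_all add: eval_ones_add eval_ones_mult flip: single_one)

lemma one_plus_beta_Var_neq_0: "1 + beta * Var j \<noteq> 0"
proof
  assume "1 + beta * Var j = 0"
  then have "Poly_Mapping.lookup (1 + beta * Var j) 0 = 0"
    by simp
  moreover have "Poly_Mapping.single j (1::nat) \<noteq> 0"
    by (metis lookup_single_eq lookup_zero one_neq_zero)
  ultimately show False
    by (simp add: beta_def Var_def mult_single lookup_add lookup_single when_def)
qed

lemma Var_minus_Var_neq_0: "i \<noteq> j \<Longrightarrow> Var i - Var j \<noteq> 0"
proof
  assume "i \<noteq> j" "Var i - Var j = 0"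
  then have "Poly_Mapping.lookup (Var i - Var j) (Poly_Mapping.single i 1) = 0"
    by simp
  moreover have "Poly_Mapping.single j (1::nat) \<noteq> Poly_Mapping.single i 1"
    using \<open>i \<noteq> j\<close> by (metis lookup_single_eq lookup_single_not_eq zero_neq_one)
  ultimately show False
    by (simp add: Var_def lookup_minus lookup_single when_def)
qed

lemma divdiff_eqI:
  assumes "(Var i - Var (Suc i)) * g = f - swapvars i f"
  shows "divdiff i f = g"
  unfolding divdiff_def
proof (rule the_equality)
  fix g' assume "(Var i - Var (Suc i)) * g' = f - swapvars i f"
  with assms have "(Var i - Var (Suc i)) * g' = (Var i - Var (Suc i)) * g"
    by simp
  then show "g' = g"
    using Var_minus_Var_neq_0[of i "Suc i"] by simp
qed (rule assms)

lemma swapvars_mult_h_fk: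
  assumes "1 \<le> i" "i < n"
  shows "swapvars i (mult_h beta i (Var (Suc i)) (fk beta n Var) v)
       = mult_h beta i (Var (Suc i)) (fk beta n Var) v"
proof -
  interpret comm_ring_hom "swapvars i"
    by (rule comm_ring_hom_swapvars)
  have Var: "swapvars i \<circ> Var = Var \<circ> \<sigma> i"
    by (simp add: fun_eq_iff)
  have "swapvars i (mult_h beta i (Var (Suc i)) (fk beta n Var) v)
      = (swapvars i \<circ> mult_h beta i (Var (Suc i)) (fk beta n Var)) v"
    by simp
  also have "\<dots> = mult_h beta i (Var i) (fk beta n (Var \<circ> \<sigma> i)) v"
    by (simp only: hom_mult_h hom_fk Var swapvars_beta swapvars_Var transpose_apply_second)
  finally have "swapvars i (mult_h beta i (Var (Suc i)) (fk beta n Var) v)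
      = mult_h beta i (Var i) (fk beta n (Var \<circ> \<sigma> i)) v" .
  moreover have "(1 + beta * Var (Suc i)) * mult_h beta i (Var (Suc i)) (fk beta n Var) v
      = (1 + beta * Var (Suc i)) * mult_h beta i (Var i) (fk beta n (Var \<circ> \<sigma> i)) v"
    by (rule fk_swap_scaled[OF assms])
  ultimately show ?thesis
    using one_plus_beta_Var_neq_0 by simp
qed

text \<open>With \<open>H = G h\<^sub>i(x\<^bsub>i+1\<^esub>)\<close>, which is symmetric in \<open>x\<^sub>i, x\<^bsub>i+1\<^esub>\<close>, one has
  \<open>(1 + \<beta> x\<^bsub>i+1\<^esub>) G\<^bsub>w s\<^sub>i\<^esub> = H\<^bsub>w s\<^sub>i\<^esub> - x\<^bsub>i+1\<^esub> H\<^sub>w\<close> and \<open>H\<^sub>w = G\<^sub>w\<close>.\<close>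

lemma fk_divdiff:
  assumes "1 \<le> i" "i < n" "w i < w (Suc i)"
  shows "divdiff i ((1 + beta * Var (Suc i)) * fk beta n Var (w \<circ> \<sigma> i)) = fk beta n Var w"
proof -
  let ?G = "fk beta n Var" and ?w' = "w \<circ> \<sigma> i"
  let ?H = "mult_h beta i (Var (Suc i)) ?G"
  have H: "?H w = ?G w" "?H ?w' = ?G ?w' + Var (Suc i) * (?G w + beta * ?G ?w')"
    using assms(3) by (simp_all add: mult_h_def mult_u_def comp_assoc)
  let ?f = "(1 + beta * Var (Suc i)) * ?G ?w'"
  have f: "?f = ?H ?w' - Var (Suc i) * ?H w"
    using H by (simp add: algebra_simps)
  interpret comm_ring_hom "swapvars i"
    by (rule comm_ring_hom_swapvars)
  have "swapvars i ?f = ?H ?w' - Var i * ?H w"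
    unfolding f by (simp add: swapvars_mult_h_fk[OF assms(1,2)])
  with f H(1) have "(Var i - Var (Suc i)) * ?G w = ?f - swapvars i ?f"
    by (simp add: algebra_simps)
  then show ?thesis
    by (rule divdiff_eqI)
qed

section \<open>The leading coefficient\<close>

definition inversions :: "nat \<Rightarrow> (nat \<Rightarrow> nat) \<Rightarrow> (nat \<times> nat) set" where
  "inversions n v = {(p, q). 1 \<le> p \<and> p < q \<and> q \<le> n \<and> v q < v p}"

lemma finite_inversions [simp]: "finite (inversions n v)"
  by (rule finite_subset[of _ "{1..n} \<times> {1..n}"]) (auto simp: inversions_def)

lemma card_inversions_le: "card (inversions n v) \<le> n * n"
proof -
  have "card (inversions n v) \<le> card ({1..n} \<times> {1..n})"
    by (rule card_mono) (auto simp: inversions_def)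
  then show ?thesis
    by (simp add: card_cartesian_product)
qed

lemma inversions_id [simp]: "inversions n id = {}"
  by (auto simp: inversions_def)

lemma inversions_comp_transpose:
  assumes "a \<in> {1..<n}" and "v (Suc a) < v a"
  shows "inversions n (v \<circ> \<sigma> a) = map_prod (\<sigma> a) (\<sigma> a) -` (inversions n v - {(a, Suc a)})"
  using assms by (auto simp: inversions_def transpose_def split: if_splits)

lemma card_inversions_descent:
  assumes "a \<in> {1..<n}" and "v (Suc a) < v a"
  shows "card (inversions n (v \<circ> \<sigma> a)) + 1 = card (inversions n v)"
proof -
  have "inj (map_prod (\<sigma> a) (\<sigma> a))" "surj (map_prod (\<sigma> a) (\<sigma> a))"
    by (simp_all add: prod.inj_map inj_transpose map_prod_surj surj_transpose)
  moreover have "(a, Suc a) \<in> inversions n v"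
    using assms by (auto simp: inversions_def)
  moreover from this have "card (inversions n v) > 0"
    by (auto simp: card_gt_0_iff)
  ultimately show ?thesis
    unfolding inversions_comp_transpose[OF assms] by (simp add: card_vimage_inj)
qed

lemma card_inversions_ascent:
  assumes "a \<in> {1..<n}" and "v a < v (Suc a)"
  shows "card (inversions n (v \<circ> \<sigma> a)) = card (inversions n v) + 1"
  using card_inversions_descent[of a n "v \<circ> \<sigma> a"] assms by (simp add: comp_assoc)

lemma card_inversions_le_Suc:
  assumes "a \<in> {1..<n}"
  shows "card (inversions n v) \<le> Suc (card (inversions n (v \<circ> \<sigma> a)))"
proof -
  consider "v (Suc a) < v a" | "v a < v (Suc a)" | "v a = v (Suc a)"
    by linarith
  then show ?thesis
  proof cases
    case 3
    then have "v \<circ> \<sigma> a = v"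
      by (auto simp: fun_eq_iff transpose_def)
    then show ?thesis
      by simp
  qed (use card_inversions_descent[OF assms] card_inversions_ascent[OF assms] in auto)
qed

text \<open>A factor \<open>h\<^sub>a(x)\<close> changes the number of inversions by at most one, so a word shorter
  than \<open>\<ell>(v)\<close> cannot reach \<open>v\<close>, and a word of length \<open>\<ell>(v)\<close> reaches it only through
  descents.\<close>

fun top_coeff :: "(nat \<Rightarrow> nat) \<Rightarrow> (nat \<times> 'a::comm_ring_1) list \<Rightarrow> 'a" where
  "top_coeff v [] = hecke_one v"
| "top_coeff v ((a, x) # ws) = (if v (Suc a) < v a then x * top_coeff (v \<circ> \<sigma> a) ws else 0)"

lemma mult_hs_hecke_one_short:
  assumes "fst ` set ws \<subseteq> {1..<n}" and "length ws < card (inversions n v)"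
  shows "mult_hs b ws hecke_one v = 0"
  using assms
proof (induction ws arbitrary: v rule: rev_induct)
  case Nil
  then show ?case
    by (auto simp: hecke_one_def)
next
  case (snoc p ws)
  obtain a x where p: "p = (a, x)"
    by (cases p)
  have a: "a \<in> {1..<n}" and ws: "fst ` set ws \<subseteq> {1..<n}"
    using snoc.prems(1) by (auto simp: p)
  have "length ws < card (inversions n (v \<circ> \<sigma> a))"
    using snoc.prems(2) card_inversions_le_Suc[OF a, of v] by simp
  then have "mult_hs b ws hecke_one (v \<circ> \<sigma> a) = 0"
    by (rule snoc.IH[OF ws])
  moreover have "mult_hs b ws hecke_one v = 0"
    using snoc.prems(2) by (intro snoc.IH[OF ws]) simp
  ultimately show ?case
    by (simp add: p mult_hs_append mult_h_def mult_u_def)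
qed

lemma mult_hs_hecke_one_top_coeff:
  assumes "fst ` set ws \<subseteq> {1..<n}" and "length ws \<le> card (inversions n v)"
  shows "mult_hs b ws hecke_one v = top_coeff v (rev ws)"
  using assms
proof (induction ws arbitrary: v rule: rev_induct)
  case (snoc p ws)
  obtain a x where p: "p = (a, x)"
    by (cases p)
  have a: "a \<in> {1..<n}" and ws: "fst ` set ws \<subseteq> {1..<n}"
    using snoc.prems(1) by (auto simp: p)
  have short: "mult_hs b ws hecke_one v = 0"
    using snoc.prems by (intro mult_hs_hecke_one_short[OF ws]) auto
  show ?case
  proof (cases "v (Suc a) < v a")
    case True
    then have "length ws \<le> card (inversions n (v \<circ> \<sigma> a))"
      using card_inversions_descent[OF a True] snoc.prems(2) by simp
    with True show ?thesis
      by (simp add: p mult_hs_append mult_h_def mult_u_def short snoc.IH[OF ws] comp_def)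
  qed (simp add: p mult_hs_append mult_h_def mult_u_def short)
qed simp

text \<open>\<open>cycle_up r m = \<sigma> r \<circ> \<sigma> (r + 1) \<circ> \<cdots> \<circ> \<sigma> (m - 1)\<close> is traversed by one row
  of the reversed Fomin--Kirillov word, and \<open>w0_upto n k\<close> is reached after the rows
  \<open>k - 1, \<dots>, 1\<close>.\<close>

definition cycle_up :: "nat \<Rightarrow> nat \<Rightarrow> nat \<Rightarrow> nat" where
  "cycle_up r m p = (if r \<le> p \<and> p < m then Suc p else if p = m then r else p)"

lemma cycle_up_same: "cycle_up r r = id"
  by (simp add: fun_eq_iff cycle_up_def)

lemma comp_cycle_up_Suc: "r \<le> m \<Longrightarrow> v \<circ> cycle_up r m \<circ> \<sigma> m = v \<circ> cycle_up r (Suc m)"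
  by (auto simp: fun_eq_iff cycle_up_def transpose_def)

lemma top_coeff_row:
  assumes "r \<le> m" and "\<forall>j. r < j \<and> j \<le> m \<longrightarrow> v j < v r"
  shows "top_coeff v (map (\<lambda>a. (a, x)) [r..<m] @ ws) = x ^ (m - r) * top_coeff (v \<circ> cycle_up r m) ws"
  using assms
proof (induction m arbitrary: ws rule: dec_induct)
  case base
  then show ?case
    by (simp add: cycle_up_same)
next
  case (step m)
  have descent: "(v \<circ> cycle_up r m) (Suc m) < (v \<circ> cycle_up r m) m"
    using step by (simp add: cycle_up_def)
  have "top_coeff v (map (\<lambda>a. (a, x)) [r..<Suc m] @ ws)
      = top_coeff v (map (\<lambda>a. (a, x)) [r..<m] @ (m, x) # ws)"
    using step.hyps by simp
  also have "\<dots> = x ^ (m - r) * top_coeff (v \<circ> cycle_up r m) ((m, x) # ws)"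
    using step.IH step.prems by (simp add: comp_def)
  also have "top_coeff (v \<circ> cycle_up r m) ((m, x) # ws) = x * top_coeff (v \<circ> cycle_up r (Suc m)) ws"
    by (simp only: top_coeff.simps if_P[OF descent] comp_cycle_up_Suc[OF step.hyps(1)])
  finally show ?case
    using step.hyps by (simp add: Suc_diff_le comp_def)
qed

lemma card_inversions_row:
  assumes "1 \<le> r" "r \<le> m" "m \<le> n" and "\<forall>j. r < j \<and> j \<le> m \<longrightarrow> v j < v r"
  shows "card (inversions n v) = card (inversions n (v \<circ> cycle_up r m)) + (m - r)"
  using assms(2-)
proof (induction m rule: dec_induct)
  case base
  then show ?case
    by (simp add: cycle_up_same)
next
  case (step m)
  have "(v \<circ> cycle_up r m) (Suc m) < (v \<circ> cycle_up r m) m"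
    using step by (simp add: cycle_up_def)
  moreover have "m \<in> {1..<n}"
    using assms(1) step by simp
  ultimately have "card (inversions n (v \<circ> cycle_up r (Suc m))) + 1 = card (inversions n (v \<circ> cycle_up r m))"
    using card_inversions_descent by (simp only: comp_cycle_up_Suc[OF step.hyps(1), symmetric])
  with step show ?case
    by (simp add: comp_def)
qed

definition w0_upto :: "nat \<Rightarrow> nat \<Rightarrow> nat \<Rightarrow> nat" where
  "w0_upto n k p = (if 1 \<le> p \<and> p < k then Suc n - p else if k \<le> p \<and> p \<le> n then Suc p - k else p)"

lemma w0_upto_1: "w0_upto n (Suc 0) = id"
  by (simp add: fun_eq_iff w0_upto_def)

lemma w0_upto_n: "1 \<le> n \<Longrightarrow> w0_upto n n = w0 n"
  by (auto simp: fun_eq_iff w0_upto_def w0_def)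

lemma w0_upto_Suc:
  "1 \<le> k \<Longrightarrow> k < n \<Longrightarrow> w0_upto n (Suc k) \<circ> cycle_up k n = w0_upto n k"
  by (auto simp: fun_eq_iff cycle_up_def w0_upto_def)

lemma w0_upto_row: "1 \<le> k \<Longrightarrow> \<forall>j. k < j \<and> j \<le> n \<longrightarrow> w0_upto n (Suc k) j < w0_upto n (Suc k) k"
  by (auto simp: w0_upto_def)

lemma top_coeff_w0_upto:
  assumes "1 \<le> k" "k \<le> n"
  shows "top_coeff (w0_upto n k) (rev (fk_rows n x [1..<k])) = (\<Prod>r\<in>{1..<k}. x r ^ (n - r))
       \<and> card (inversions n (w0_upto n k)) = length (fk_rows n x [1..<k])"
  using assms
proof (induction k rule: dec_induct)
  case base
  then show ?case
    by (simp add: w0_upto_1 hecke_one_def flip: id_def)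
next
  case (step k)
  have rev_rows: "rev (fk_rows n x [1..<Suc k]) = map (\<lambda>a. (a, x k)) [k..<n] @ rev (fk_rows n x [1..<k])"
    using step.hyps(1) by (simp add: fk_row_def rev_map)
  have k: "1 \<le> k" "k < n"
    using step by simp_all
  note row = w0_upto_row[OF k(1), of n]
  have "top_coeff (w0_upto n (Suc k)) (rev (fk_rows n x [1..<Suc k]))
      = x k ^ (n - k) * top_coeff (w0_upto n (Suc k) \<circ> cycle_up k n) (rev (fk_rows n x [1..<k]))"
    unfolding rev_rows using k by (intro top_coeff_row[OF _ row]) simp
  moreover have "card (inversions n (w0_upto n (Suc k)))
      = card (inversions n (w0_upto n (Suc k) \<circ> cycle_up k n)) + (n - k)"
    using k by (intro card_inversions_row[OF _ _ _ row]) simp_all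
  moreover have "(\<Prod>r\<in>{1..<Suc k}. x r ^ (n - r)) = x k ^ (n - k) * (\<Prod>r\<in>{1..<k}. x r ^ (n - r))"
    using step.hyps(1) by (simp add: prod.atLeastLessThan_Suc mult.commute)
  ultimately show ?case
    using step by (simp add: fk_row_def w0_upto_Suc[OF k])
qed

lemma fk_w0: "fk b n x (w0 n) = (\<Prod>j\<in>{1..n}. x j ^ (n - j))"
proof (cases "n = 0")
  case True
  then have "w0 n = id"
    by (simp add: fun_eq_iff w0_def)
  with True show ?thesis
    by (simp add: fk_def fk_rows_def hecke_one_def)
next
  case False
  then have n: "1 \<le> n"
    by simp
  have rows: "fk_rows n x [1..<Suc n] = fk_rows n x [1..<n]"
    using n by simp
  let ?W = "fk_rows n x [1..<n]"
  have top: "top_coeff (w0 n) (rev ?W) = (\<Prod>j\<in>{1..<n}. x j ^ (n - j))"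
    and len: "card (inversions n (w0 n)) = length ?W"
    using top_coeff_w0_upto[OF n order.refl, of x] by (simp_all add: w0_upto_n[OF n])
  have "fk b n x (w0 n) = top_coeff (w0 n) (rev ?W)"
    unfolding fk_def rows using len
    by (intro mult_hs_hecke_one_top_coeff) (auto simp: fk_rows_def fk_row_def)
  also have "\<dots> = (\<Prod>j\<in>{1..<n}. x j ^ (n - j))"
    by (rule top)
  also have "\<dots> = (\<Prod>j\<in>{1..n}. x j ^ (n - j))"
    using n by (simp add: atLeastLessThanSuc_atLeastAtMost[symmetric] prod.atLeastLessThan_Suc)
  finally show ?thesis .
qed

section \<open>Grothendieck polynomials as coefficients\<close>

lemma is_groth_imp_fk: "is_groth n w G \<Longrightarrow> G = fk beta n Var w"
proof (induction rule: is_groth.induct)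
  case top
  then show ?case
    by (simp add: fk_w0)
next
  case (step w i G)
  then show ?case
    using fk_divdiff[of i n w] by (simp add: comp_def)
qed

lemma descending_gap:
  assumes "\<forall>i\<in>{1..<n}. w (Suc i) < w i" and "1 \<le> p" "p \<le> q" "q \<le> n"
  shows "w q + (q - p) \<le> w p"
  using assms(3,4)
proof (induction q rule: dec_induct)
  case (step q)
  then have "w (Suc q) < w q"
    using assms(1,2) by simp
  with step show ?case
    by simp
qed simp

lemma descending_permutation_eq_w0:
  assumes w: "w permutes {1..n}" and desc: "\<forall>i\<in>{1..<n}. w (Suc i) < w i"
  shows "w = w0 n"
proof
  fix p
  show "w p = w0 n p"
  proof (cases "p \<in> {1..n}")
    case True
    then have p: "1 \<le> p" "p \<le> n"
      by simp_all
    have "w n \<in> {1..n}" "w 1 \<in> {1..n}"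
      using p permutes_in_image[OF w] by simp_all
    moreover have "w n + (n - p) \<le> w p" "w p + (p - 1) \<le> w 1"
      using p by (intro descending_gap[OF desc]; simp)+
    ultimately have "w p = Suc n - p"
      using p by simp linarith
    with True show ?thesis
      by (simp add: w0_def)
  qed (use w in \<open>auto simp: permutes_not_in w0_def\<close>)
qed

lemma permutation_ascent:
  assumes w: "w permutes {1..n}" and "w \<noteq> w0 n"
  obtains i where "i \<in> {1..<n}" "w i < w (Suc i)"
proof -
  have "w (Suc i) \<noteq> w i" for i
    using permutes_inj[OF w] by (metis injD n_not_Suc_n)
  then have "\<not> (\<forall>i\<in>{1..<n}. w (Suc i) < w i)"
    using descending_permutation_eq_w0[OF w] assms(2) by blast
  with that \<open>\<And>i. w (Suc i) \<noteq> w i\<close> show ?thesis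
    by (meson linorder_neqE_nat)
qed

lemma is_groth_fk:
  assumes "w permutes {1..n}"
  shows "is_groth n w (fk beta n Var w)"
  using assms
proof (induction "n * n - card (inversions n w)" arbitrary: w rule: less_induct)
  case less
  show ?case
  proof (cases "w = w0 n")
    case True
    then show ?thesis
      using is_groth.top[of n] by (simp add: fk_w0)
  next
    case False
    then obtain i where i: "i \<in> {1..<n}" "w i < w (Suc i)"
      using permutation_ascent[OF less.prems] by blast
    have "w \<circ> \<sigma> i permutes {1..n}"
      using less.prems i by (intro permutes_compose permutes_swap_id) auto
    moreover have "n * n - card (inversions n (w \<circ> \<sigma> i)) < n * n - card (inversions n w)"
      using card_inversions_ascent[OF i] card_inversions_le[of n "w \<circ> \<sigma> i"] by simp
    ultimately have "is_groth n (w \<circ> \<sigma> i) (fk beta n Var (w \<circ> \<sigma> i))"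
      using less.hyps by blast
    then have "is_groth n w (divdiff i ((1 + beta * Var (Suc i)) * fk beta n Var (w \<circ> \<sigma> i)))"
      using i by (intro is_groth.step) simp_all
    with i show ?thesis
      using fk_divdiff[of i n w] by simp
  qed
qed

lemma groth_eq_fk:
  assumes "w permutes {1..n}"
  shows "groth n w = fk beta n Var w"
  unfolding groth_def using is_groth_fk[OF assms] by (rule the_equality) (rule is_groth_imp_fk)

lemma Upsilon_eq_fk:
  assumes "w permutes {1..n}"
  shows "Upsilon n w = fk [:0, 1:] n (\<lambda>_. 1) w"
proof -
  interpret comm_ring_hom eval_ones
    by (rule comm_ring_hom_eval_ones)
  have Var: "eval_ones \<circ> Var = (\<lambda>_. 1)"
    by (simp add: fun_eq_iff Var_def)
  have beta: "eval_ones beta = [:0, 1:]"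
    by (simp add: beta_def)
  have "Upsilon n w = (eval_ones \<circ> fk beta n Var) w"
    by (simp add: Upsilon_def groth_eq_fk[OF assms])
  also have "\<dots> = fk [:0, 1:] n (\<lambda>_. 1) w"
    by (simp only: hom_fk Var beta)
  finally show ?thesis .
qed

section \<open>Inversion\<close>

text \<open>\<open>u_mult\<close> and \<open>h_mult\<close> are left multiplication by \<open>u\<^sub>a\<close> and \<open>h\<^sub>a(x)\<close>. Their
  formula uses \<open>inv v\<close>, a genuine inverse only for bijections \<open>v\<close>, so they are compared
  at bijections only (\<open>eq_on_bij\<close>).\<close>

definition u_mult :: "'a::comm_ring_1 \<Rightarrow> nat \<Rightarrow> 'a hecke \<Rightarrow> 'a hecke" where
  "u_mult b a F v = (if inv v (Suc a) < inv v a then F (\<sigma> a \<circ> v) + b * F v else 0)"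

definition h_mult :: "'a::comm_ring_1 \<Rightarrow> nat \<Rightarrow> 'a \<Rightarrow> 'a hecke \<Rightarrow> 'a hecke" where
  "h_mult b a x F = (\<lambda>v. F v + x * u_mult b a F v)"

definition eq_on_bij :: "'a hecke \<Rightarrow> 'a hecke \<Rightarrow> bool" where
  "eq_on_bij F G \<longleftrightarrow> (\<forall>v. bij v \<longrightarrow> F v = G v)"

lemma eq_on_bijD: "eq_on_bij F G \<Longrightarrow> bij v \<Longrightarrow> F v = G v"
  by (simp add: eq_on_bij_def)

lemma transpose_less_transpose_iff:
  assumes "x \<noteq> y" and "{x, y} \<noteq> {a, Suc a}"
  shows "\<sigma> a x < \<sigma> a y \<longleftrightarrow> x < y"
  using assms by (auto simp: transpose_def doubleton_eq_iff)

lemma u_mult_mult_u_commute: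
  assumes v: "bij v"
  shows "u_mult b a (mult_u b c F) v = mult_u b c (u_mult b a F) v"
proof -
  have inv_v: "inv v (v p) = p" "v (inv v q) = q" for p q
    using v by (simp_all add: bij_is_inj bij_is_surj surj_f_inv_f)
  have inv_comp: "inv (v \<circ> \<sigma> c) = \<sigma> c \<circ> inv v"
    using v by (simp add: o_inv_distrib)
  consider (swap) "v c = Suc a" "v (Suc c) = a" | (same) "v c = a" "v (Suc c) = Suc a"
    | (generic) "{v c, v (Suc c)} \<noteq> {a, Suc a}"
    by (auto simp: doubleton_eq_iff)
  then show ?thesis
  proof cases
    case swap
    then have "\<sigma> a \<circ> v = v \<circ> \<sigma> c"
      using inv_v by (auto simp: fun_eq_iff transpose_def) metis+
    with swap show ?thesis
      using inv_v by (simp add: u_mult_def mult_u_def inv_comp transpose_def) metis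
  next
    case same
    then have "inv v a = c" "inv v (Suc a) = Suc c"
      using inv_v by metis+
    with same show ?thesis
      by (simp add: u_mult_def mult_u_def)
  next
    case generic
    have "v (Suc c) \<noteq> v c" "inv v (Suc a) \<noteq> inv v a"
      using inv_v by (metis n_not_Suc_n)+
    moreover have "{inv v (Suc a), inv v a} \<noteq> {c, Suc c}"
      using generic inv_v by (auto simp: doubleton_eq_iff) metis+
    ultimately have "\<sigma> a (v (Suc c)) < \<sigma> a (v c) \<longleftrightarrow> v (Suc c) < v c"
      and "\<sigma> c (inv v (Suc a)) < \<sigma> c (inv v a) \<longleftrightarrow> inv v (Suc a) < inv v a"
      using generic by (simp_all add: transpose_less_transpose_iff insert_commute)
    then show ?thesis
      by (simp add: u_mult_def mult_u_def inv_comp comp_assoc algebra_simps)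
  qed
qed

lemma h_mult_mult_h_commute:
  "eq_on_bij (h_mult b a x (mult_h b c y F)) (mult_h b c y (h_mult b a x F))"
proof -
  have u_mult_add: "u_mult b a (\<lambda>v. G v + H v) w = u_mult b a G w + u_mult b a H w"
    and u_mult_scale: "u_mult b a (\<lambda>v. z * G v) w = z * u_mult b a G w" for G H z w
    by (simp_all add: u_mult_def algebra_simps)
  show ?thesis
    unfolding eq_on_bij_def h_mult_def mult_h_def
    by (clarsimp simp: u_mult_add u_mult_scale mult_u_add mult_u_scale u_mult_mult_u_commute)
      (simp add: algebra_simps)
qed

lemma eq_on_bij_mult_hs: "eq_on_bij F G \<Longrightarrow> eq_on_bij (mult_hs b ws F) (mult_hs b ws G)"
proof (induction b ws F arbitrary: G rule: mult_hs.induct)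
  case (2 b a x ws F)
  have "eq_on_bij (mult_h b a x F) (mult_h b a x G)"
    using "2.prems" by (simp add: eq_on_bij_def mult_h_def mult_u_def bij_comp)
  then show ?case
    by (simp add: "2.IH")
qed simp

lemma h_mult_mult_hs_commute:
  "eq_on_bij (h_mult b a x (mult_hs b ws F)) (mult_hs b ws (h_mult b a x F))"
proof (induction b ws F rule: mult_hs.induct)
  case (2 b c y ws F)
  have "eq_on_bij (mult_hs b ws (h_mult b a x (mult_h b c y F))) (mult_hs b ws (mult_h b c y (h_mult b a x F)))"
    by (rule eq_on_bij_mult_hs[OF h_mult_mult_h_commute])
  with "2.IH" show ?case
    by (simp add: eq_on_bij_def)
qed (simp add: eq_on_bij_def)

lemma h_mult_hecke_one: "eq_on_bij (h_mult b a x hecke_one) (mult_h b a x hecke_one)"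
proof -
  have "u_mult b a hecke_one v = mult_u b a hecke_one v" if v: "bij v" for v
  proof -
    have "\<sigma> a \<circ> (\<sigma> a \<circ> v) = v" "v \<circ> \<sigma> a \<circ> \<sigma> a = v"
      by (simp_all add: fun_eq_iff)
    then have "\<sigma> a \<circ> v = id \<longleftrightarrow> v = \<sigma> a" "v \<circ> \<sigma> a = id \<longleftrightarrow> v = \<sigma> a"
      by auto
    moreover have "inv (\<sigma> a) = \<sigma> a"
      by simp
    ultimately show ?thesis
      by (cases "v = id \<or> v = \<sigma> a") (auto simp: u_mult_def mult_u_def hecke_one_def)
  qed
  then show ?thesis
    by (simp add: eq_on_bij_def h_mult_def mult_h_def)
qed

text \<open>Inversion is an anti-automorphism fixing every \<open>u\<^sub>a\<close>: it reverses words.\<close>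

lemma mult_hs_hecke_one_inv:
  "bij w \<Longrightarrow> mult_hs b ws hecke_one (inv w) = mult_hs b (rev ws) hecke_one w"
proof (induction ws arbitrary: w rule: rev_induct)
  case Nil
  then show ?case
    by (simp add: hecke_one_def) (metis inv_id inv_inv_eq)
next
  case (snoc p ws)
  obtain a x where p: "p = (a, x)"
    by (cases p)
  have "inv w \<circ> \<sigma> a = inv (\<sigma> a \<circ> w)"
    using snoc.prems by (simp add: o_inv_distrib)
  moreover have "mult_hs b ws hecke_one (inv (\<sigma> a \<circ> w)) = mult_hs b (rev ws) hecke_one (\<sigma> a \<circ> w)"
    by (rule snoc.IH) (use bij_comp[OF snoc.prems bij_transpose] in \<open>simp add: comp_def\<close>)
  ultimately have "mult_hs b (ws @ [p]) hecke_one (inv w) = h_mult b a x (mult_hs b (rev ws) hecke_one) w"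
    using snoc.IH[OF snoc.prems]
    by (simp add: p mult_hs_append mult_h_def mult_u_def h_mult_def u_mult_def)
  also have "\<dots> = mult_hs b (rev ws) (h_mult b a x hecke_one) w"
    by (rule eq_on_bijD[OF h_mult_mult_hs_commute snoc.prems])
  also have "\<dots> = mult_hs b (rev ws) (mult_h b a x hecke_one) w"
    by (rule eq_on_bijD[OF eq_on_bij_mult_hs[OF h_mult_hecke_one] snoc.prems])
  finally show ?case
    by (simp add: p)
qed

text \<open>With all parameters equal, the reversed word is brought back to the original one by
  commuting factors with distant indices.\<close>

lemma fk_row_through_rev_rows:
  assumes "k \<le> j" "j \<le> n"
  shows "mult_hs b (fk_row k j c @ rev (fk_rows n (\<lambda>_. c) [Suc k..<Suc j])) F
       = mult_hs b (rev (fk_rows n (\<lambda>_. c) [k..<j])) F"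
  using assms
proof (induction j arbitrary: F rule: dec_induct)
  case (step j)
  let ?A = "fk_row k j c" and ?R = "rev (fk_row (Suc j) n c)"
    and ?D = "rev (fk_rows n (\<lambda>_. c) [Suc k..<Suc j])"
  have far: "\<forall>(a, x) \<in> set ?A. \<forall>(a', x') \<in> set ?R. Suc a < a' \<or> Suc a' < a"
    by (auto simp: fk_row_def)
  have D: "rev (fk_rows n (\<lambda>_. c) [Suc k..<Suc (Suc j)]) = ?R @ ?D"
    using step.hyps by simp
  have rows: "rev (fk_rows n (\<lambda>_. c) [k..<Suc j]) = (j, c) # ?R @ rev (fk_rows n (\<lambda>_. c) [k..<j])"
    using step by (simp add: fk_row_def upt_conv_Cons)
  have "mult_hs b (fk_row k (Suc j) c @ rev (fk_rows n (\<lambda>_. c) [Suc k..<Suc (Suc j)])) F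
      = mult_hs b ?D (mult_hs b (?A @ ?R) (mult_h b j c F))"
    by (simp only: fk_row_Suc[OF step.hyps(1)] D append_Cons append_assoc[symmetric]
        mult_hs.simps mult_hs_append)
  also have "\<dots> = mult_hs b ?D (mult_hs b (?R @ ?A) (mult_h b j c F))"
    by (simp only: mult_hs_commute[OF far])
  also have "\<dots> = mult_hs b (?A @ ?D) (mult_hs b ?R (mult_h b j c F))"
    by (simp only: mult_hs_append)
  also have "\<dots> = mult_hs b (rev (fk_rows n (\<lambda>_. c) [k..<j])) (mult_hs b ?R (mult_h b j c F))"
    using step by (intro step.IH) simp
  also have "\<dots> = mult_hs b (rev (fk_rows n (\<lambda>_. c) [k..<Suc j])) F"
    by (simp only: rows mult_hs.simps mult_hs_append)
  finally show ?case .
qed simp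

lemma fk_rows_const_rev:
  "k \<le> Suc n \<Longrightarrow> mult_hs b (rev (fk_rows n (\<lambda>_. c) [k..<Suc n])) F
     = mult_hs b (fk_rows n (\<lambda>_. c) [k..<Suc n]) F"
proof (induction k arbitrary: F rule: inc_induct)
  case (step k)
  have rows: "fk_rows n (\<lambda>_. c) [k..<Suc n] = fk_row k n c @ fk_rows n (\<lambda>_. c) [Suc k..<Suc n]"
    using step.hyps by (simp add: upt_conv_Cons)
  have last_row: "fk_rows n (\<lambda>_. c) [k..<Suc n] = fk_rows n (\<lambda>_. c) [k..<n]"
    using step.hyps by simp
  have "mult_hs b (fk_rows n (\<lambda>_. c) [k..<Suc n]) F
      = mult_hs b (fk_row k n c @ rev (fk_rows n (\<lambda>_. c) [Suc k..<Suc n])) F"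
    by (simp only: rows mult_hs_append step.IH)
  also have "\<dots> = mult_hs b (rev (fk_rows n (\<lambda>_. c) [k..<Suc n])) F"
    using step.hyps by (simp only: fk_row_through_rev_rows last_row)
  finally show ?case ..
qed simp

lemma fk_const_inv:
  assumes "bij w"
  shows "fk b n (\<lambda>_. c) (inv w) = fk b n (\<lambda>_. c) w"
  unfolding fk_def mult_hs_hecke_one_inv[OF assms] by (subst fk_rows_const_rev) simp_all

theorem proposition2p3:
  fixes n :: nat and w :: "nat \<Rightarrow> nat"
  assumes "w permutes {1..n}"
  shows "Upsilon n w = Upsilon n (inv w)"
proof -
  have "Upsilon n (inv w) = fk [:0, 1:] n (\<lambda>_. 1) (inv w)"
    by (rule Upsilon_eq_fk[OF permutes_inv[OF assms]])
  also have "\<dots> = fk [:0, 1:] n (\<lambda>_. 1) w"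
    by (rule fk_const_inv[OF permutes_bij[OF assms]])
  finally show ?thesis
    by (simp add: Upsilon_eq_fk[OF assms])
qed

end
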